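(* Let $(M_0,g_0)$ be a smooth three-dimensional Riemannian manifold and $M\subset M_0$ an embedded two-dimensional submanifold with induced metric $g$. Work locally, on an open set of $M_0$ meeting $M$ on which there is an adapted orthonormal frame $\{b^1,b^2,b^3\}$: along $M$ the fields $b^1,b^2$ are tangent to $M$ and $b^3$ is a unit normal. Let $b_z^1,b_z^2$ be the restrictions of $b^1,b^2$ to $M$. Let $v=v^1b_z^1+v^2b_z^2$ be a smooth vector field on $M$. Then there is an extension $u=u^1b^1+u^2b^2+u^3b^3$ of $v$ to a neighborhood of $M$ (that is, $u^3=0$ on $M$ and $u^j|_M=v^j$ for $j=1,2$) such that on $M$ $$\mathsf{curl}(u)=\mathsf{rot}(v)\,b^3\qquad\text{and}\qquad \mathsf{div}(u)=\mathsf{div}(v).$$ Moreover, if $\mathsf{div}(v)=0$, then there is an extension $u$ of $v$ such that $\mathsf{div}(u)=0$ in a neighborhood of $M$.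
   Context: Let $\theta^j=\flat b^j$ and $\theta_z^j=\flat b_z^j$ be the dual coframes. Orient $M_0$ by $\theta^1\wedge\theta^2\wedge\theta^3$ and $M$ by $\theta_z^1\wedge\theta_z^2$, with $\ast$ the corresponding Hodge stars. Define $$\mathsf{curl}(u)=\sharp\ast d(\flat u),\qquad \mathsf{rot}(v)=\ast d(\flat v).$$ Divergences are taken with respect to $g_0$ on $M_0$ and $g$ on $M$. All statements are local. *)

theory Defs
  imports "HOL-Analysis.Analysis"
begin

text \<open>M0 is an open set U of R^3 (coordinates x1,x2,x3) carrying an
arbitrary smooth Riemannian metric g0 (matrix of components); the surface M is the coordinate
slice {x3 = 0} of U, parametrised by y in R^2 via emb. Vector fields are given by their
coordinate component vectors; covector fields likewise.\<close>

coinductive smooth_on :: "(real^'n \<Rightarrow> real) \<Rightarrow> (real^'n) set \<Rightarrow> bool" where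
  "(\<forall>x\<in>S. f differentiable (at x)) \<Longrightarrow>
   (\<forall>w. smooth_on (\<lambda>x. frechet_derivative f (at x) w) S) \<Longrightarrow> smooth_on f S"

definition pd :: "'n::finite \<Rightarrow> (real^'n \<Rightarrow> real) \<Rightarrow> real^'n \<Rightarrow> real" where
  "pd i f x = frechet_derivative f (at x) (axis i 1)"

definition flat :: "(real^'n \<Rightarrow> real^'n^'n) \<Rightarrow> (real^'n \<Rightarrow> real^'n) \<Rightarrow> real^'n \<Rightarrow> real^'n" where
  "flat g w x = (\<chi> i. \<Sum>j\<in>UNIV. g x $ i $ j * w x $ j)"

text \<open>Exterior derivative of a 1-form alpha, evaluated on tangent vectors X, Y at x
(determinant convention: (dx^i wedge dx^j)(X,Y) = X_i Y_j - X_j Y_i).\<close>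
definition dform :: "(real^'n \<Rightarrow> real^'n) \<Rightarrow> real^'n \<Rightarrow> real^'n \<Rightarrow> real^'n \<Rightarrow> real" where
  "dform \<alpha> X Y x = (\<Sum>i\<in>UNIV. \<Sum>j\<in>UNIV. pd i (\<lambda>y. \<alpha> y $ j) x * (X $ i * Y $ j - X $ j * Y $ i))"

definition divg :: "(real^'n \<Rightarrow> real^'n^'n) \<Rightarrow> (real^'n \<Rightarrow> real^'n) \<Rightarrow> real^'n \<Rightarrow> real" where
  "divg g w x = (1 / sqrt (det (g x))) * (\<Sum>i\<in>UNIV. pd i (\<lambda>y. sqrt (det (g y)) * w y $ i) x)"

definition frame_field :: "('k::finite \<Rightarrow> real^'n \<Rightarrow> real^'n) \<Rightarrow> ('k \<Rightarrow> real^'n \<Rightarrow> real) \<Rightarrow> real^'n \<Rightarrow> real^'n" where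
  "frame_field b c x = (\<Sum>k\<in>UNIV. c k x *\<^sub>R b k x)"

text \<open>curl(u) = sharp * d(flat u) on M0, computed with the oriented g0-orthonormal frame b
(theta^j the dual coframe, orientation theta^1 wedge theta^2 wedge theta^3):
 *(theta^2 wedge theta^3) = theta^1 etc., sharp theta^k = b^k.\<close>
definition curl :: "(real^3 \<Rightarrow> real^3^3) \<Rightarrow> (3 \<Rightarrow> real^3 \<Rightarrow> real^3) \<Rightarrow> (real^3 \<Rightarrow> real^3) \<Rightarrow> real^3 \<Rightarrow> real^3" where
  "curl g0 b u x = (\<Sum>k\<in>UNIV. dform (flat g0 u) (b (k+1) x) (b (k+2) x) x *\<^sub>R b k x)"

text \<open>rot(v) = * d(flat v) on M, with the oriented g-orthonormal frame (bz1, bz2):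
 *(theta_z^1 wedge theta_z^2) = 1.\<close>
definition rot :: "(real^2 \<Rightarrow> real^2^2) \<Rightarrow> (real^2 \<Rightarrow> real^2) \<Rightarrow> (real^2 \<Rightarrow> real^2) \<Rightarrow> (real^2 \<Rightarrow> real^2) \<Rightarrow> real^2 \<Rightarrow> real" where
  "rot g B1 B2 v y = dform (flat g v) (B1 y) (B2 y) y"

definition emb :: "real^2 \<Rightarrow> real^3" where
  "emb y = (\<chi> i. if i = 1 then y $ 1 else if i = 2 then y $ 2 else 0)"

definition idx :: "2 \<Rightarrow> 3" where
  "idx a = (if a = 1 then 1 else 2)"

definition induced :: "(real^3 \<Rightarrow> real^3^3) \<Rightarrow> real^2 \<Rightarrow> real^2^2" where
  "induced g0 y = (\<chi> a c. g0 (emb y) $ idx a $ idx c)"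

text \<open>Restriction to M of a vector field tangent to M, in M-coordinates.\<close>
definition restr :: "(real^3 \<Rightarrow> real^3) \<Rightarrow> real^2 \<Rightarrow> real^2" where
  "restr B y = (\<chi> a. B (emb y) $ idx a)"

end

theory Submission
  imports Defs
begin

text \<open>In the chart, \<open>M\<close> is the slice \<open>x\<^sub>3 = 0\<close>; let \<open>Q\<close> be the projection onto it.
  Extend \<open>v\<close> constantly in \<open>x\<^sub>3\<close>, \<open>v\<^sub>e(x) = v\<^sup>1 b\<^sup>1(Q x) + v\<^sup>2 b\<^sup>2(Q x)\<close>. Along \<open>M\<close>
  the \<open>b\<^sup>3\<close> component of its curl is \<open>d(v\<^sub>e\<^sup>\<flat>)(b\<^sup>1,b\<^sup>2)\<close>, which only involves tangential
  derivatives and is therefore \<open>rot v\<close>. Adding \<open>x\<^sub>3 z\<close> changes \<open>d(u\<^sup>\<flat>)(X,Y)\<close> along \<open>M\<close>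
  only by \<open>X\<^sub>3 g\<^sub>0(z,Y) - Y\<^sub>3 g\<^sub>0(z,X)\<close> and the divergence only by \<open>z\<^sub>3\<close>. Since \<open>b\<^sup>1, b\<^sup>2\<close>
  are tangent and \<open>b\<^sup>3\<close> is transverse (\<open>b\<^sup>3\<^sub>3 \<noteq> 0\<close>), the frame components \<open>g\<^sub>0(z,b\<^sup>k)\<close>
  can be chosen to kill the \<open>b\<^sup>1, b\<^sup>2\<close> components of the curl and to make the divergence
  equal to \<open>div v\<close>.

  For the divergence-free extension, \<open>r(x) = \<rho>(Q x) v\<^sub>e(x)\<close>, with \<open>\<rho> = sqrt (det g\<^sub>0)\<close>, does not
  depend on \<open>x\<^sub>3\<close>. Subtracting \<open>x\<^sub>3 (div\<^sub>0 r)(Q x)\<close> from its third component, where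
  \<open>div\<^sub>0\<close> is the coordinate divergence, and dividing by \<open>\<rho>\<close> gives a field of divergence zero
  everywhere.\<close>

section \<open>Smooth functions\<close>

lemma smooth_on_differentiable: "smooth_on f S \<Longrightarrow> x \<in> S \<Longrightarrow> f differentiable (at x)"
  by (erule smooth_on.cases) auto

lemma smooth_on_frechet_derivative:
  "smooth_on f S \<Longrightarrow> smooth_on (\<lambda>x. frechet_derivative f (at x) w) S"
  by (erule smooth_on.cases) auto

lemma smooth_on_pd: "smooth_on f S \<Longrightarrow> smooth_on (pd i f) S"
  unfolding pd_def[abs_def] by (rule smooth_on_frechet_derivative)

lemma smooth_on_const: "smooth_on (\<lambda>x. c) S"
  by (coinduction arbitrary: c rule: smooth_on.coinduct) auto

lemma frechet_derivative_add_at: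
  assumes "f differentiable (at x)" "g differentiable (at x)"
  shows "frechet_derivative (\<lambda>x. f x + g x) (at x) h
           = frechet_derivative f (at x) h + frechet_derivative g (at x) h"
proof -
  have "((\<lambda>x. f x + g x) has_derivative
          (\<lambda>h. frechet_derivative f (at x) h + frechet_derivative g (at x) h)) (at x)"
    using assms by (intro has_derivative_add) (auto simp: frechet_derivative_works)
  then show ?thesis by (metis frechet_derivative_at)
qed

lemma frechet_derivative_diff_at:
  assumes "f differentiable (at x)" "g differentiable (at x)"
  shows "frechet_derivative (\<lambda>x. f x - g x) (at x) h
           = frechet_derivative f (at x) h - frechet_derivative g (at x) h"
proof -
  have "((\<lambda>x. f x - g x) has_derivative
          (\<lambda>h. frechet_derivative f (at x) h - frechet_derivative g (at x) h)) (at x)"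
    using assms by (intro has_derivative_diff) (auto simp: frechet_derivative_works)
  then show ?thesis by (metis frechet_derivative_at)
qed

lemma frechet_derivative_mult_at:
  fixes f g :: "'a::real_normed_vector \<Rightarrow> real"
  assumes "f differentiable (at x)" "g differentiable (at x)"
  shows "frechet_derivative (\<lambda>x. f x * g x) (at x) h
           = f x * frechet_derivative g (at x) h + frechet_derivative f (at x) h * g x"
proof -
  have "((\<lambda>x. f x * g x) has_derivative
          (\<lambda>h. f x * frechet_derivative g (at x) h + frechet_derivative f (at x) h * g x)) (at x)"
    using assms by (intro has_derivative_mult) (auto simp: frechet_derivative_works)
  then show ?thesis by (metis frechet_derivative_at)
qed

lemma frechet_derivative_compose_linear:
  assumes L: "bounded_linear L" and f: "f differentiable (at (L x))"
  shows "frechet_derivative (\<lambda>y. f (L y)) (at x) v = frechet_derivative f (at (L x)) (L v)"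
proof -
  have "((\<lambda>y. f (L y)) has_derivative (\<lambda>v. frechet_derivative f (at (L x)) (L v))) (at x)"
    using has_derivative_compose[OF bounded_linear.has_derivative[OF L has_derivative_ident], of f] f
    by (auto simp: frechet_derivative_works comp_def)
  then show ?thesis by (metis frechet_derivative_at)
qed

lemma frechet_derivative_cong_open:
  assumes "open S" "x \<in> S" "\<forall>y\<in>S. f y = g y"
  shows "frechet_derivative f (at x) = frechet_derivative g (at x)"
proof -
  have "(f has_derivative f') (at x) \<longleftrightarrow> (g has_derivative f') (at x)" for f'
    using assms has_derivative_transform_within_open[of f f' x UNIV S g]
      has_derivative_transform_within_open[of g f' x UNIV S f]
    by auto
  then show ?thesis unfolding frechet_derivative_def by simp
qed

lemma differentiable_cong_open:
  "f differentiable (at x) \<Longrightarrow> open S \<Longrightarrow> x \<in> S \<Longrightarrow> \<forall>y\<in>S. f y = g y \<Longrightarrow>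
   g differentiable (at x)"
  unfolding differentiable_def using has_derivative_transform_within_open by metis

text \<open>The coinduction invariant behind the closure properties of \<open>smooth_on\<close>. The generators
  \<open>G\<close> are needed for \<open>inverse\<close> and \<open>sqrt\<close>, whose derivatives involve the functions
  themselves.\<close>

inductive smooth_closure :: "(real^'n::finite) set \<Rightarrow> (real^'n \<Rightarrow> real) set \<Rightarrow> (real^'n \<Rightarrow> real) \<Rightarrow> bool"
  for S G where
  smooth: "smooth_on f S \<Longrightarrow> smooth_closure S G f"
| generator: "g \<in> G \<Longrightarrow> smooth_closure S G g"
| add: "smooth_closure S G f \<Longrightarrow> smooth_closure S G g \<Longrightarrow> smooth_closure S G (\<lambda>x. f x + g x)"
| mult: "smooth_closure S G f \<Longrightarrow> smooth_closure S G g \<Longrightarrow> smooth_closure S G (\<lambda>x. f x * g x)"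
| cong: "smooth_closure S G f \<Longrightarrow> \<forall>x\<in>S. f x = g x \<Longrightarrow> smooth_closure S G g"

lemma smooth_closure_derivative:
  assumes S: "open S"
    and G_differentiable: "\<forall>g\<in>G. \<forall>x\<in>S. g differentiable (at x)"
    and G_derivative: "\<forall>g\<in>G. \<forall>w. smooth_closure S G (\<lambda>x. frechet_derivative g (at x) w)"
    and f: "smooth_closure S G f"
  shows "(\<forall>x\<in>S. f differentiable (at x)) \<and>
         (\<forall>w. smooth_closure S G (\<lambda>x. frechet_derivative f (at x) w))"
  using f
proof induction
  case (smooth f)
  then show ?case using smooth_on_differentiable smooth_on_frechet_derivative smooth_closure.smooth
    by metis
next
  case (generator g)
  then show ?case using G_differentiable G_derivative by auto
next
  case (add f g)
  show ?case
  proof (intro conjI allI ballI)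
    show "(\<lambda>x. f x + g x) differentiable at x" if "x \<in> S" for x
      using add that by (auto intro: differentiable_add)
    show "smooth_closure S G (\<lambda>x. frechet_derivative (\<lambda>x. f x + g x) (at x) w)" for w
      by (rule smooth_closure.cong[OF smooth_closure.add[of S G "\<lambda>x. frechet_derivative f (at x) w"
            "\<lambda>x. frechet_derivative g (at x) w"]])
        (use add in \<open>auto simp: frechet_derivative_add_at\<close>)
  qed
next
  case (mult f g)
  show ?case
  proof (intro conjI allI ballI)
    show "(\<lambda>x. f x * g x) differentiable at x" if "x \<in> S" for x
      using mult that by (auto intro: differentiable_mult)
    show "smooth_closure S G (\<lambda>x. frechet_derivative (\<lambda>x. f x * g x) (at x) w)" for w
      by (rule smooth_closure.cong[OF smooth_closure.add[OF
              smooth_closure.mult[of S G f "\<lambda>x. frechet_derivative g (at x) w"]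
              smooth_closure.mult[of S G "\<lambda>x. frechet_derivative f (at x) w" g]]])
        (use mult in \<open>auto simp: frechet_derivative_mult_at\<close>)
  qed
next
  case (cong f g)
  show ?case
  proof (intro conjI allI ballI)
    show "g differentiable at x" if "x \<in> S" for x
      using cong that S by (metis differentiable_cong_open)
    show "smooth_closure S G (\<lambda>x. frechet_derivative g (at x) w)" for w
      by (rule smooth_closure.cong[of S G "\<lambda>x. frechet_derivative f (at x) w"])
        (use cong S in \<open>auto simp: frechet_derivative_transform_within_open\<close>)
  qed
qed

lemma smooth_closure_imp_smooth_on:
  assumes "open S"
    and "\<forall>g\<in>G. \<forall>x\<in>S. g differentiable (at x)"
    and "\<forall>g\<in>G. \<forall>w. smooth_closure S G (\<lambda>x. frechet_derivative g (at x) w)"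
    and "smooth_closure S G f"
  shows "smooth_on f S"
  using assms(4)
proof (coinduction arbitrary: f rule: smooth_on.coinduct)
  case (smooth_on f)
  then show ?case using smooth_closure_derivative[OF assms(1-3)] by blast
qed

lemma smooth_on_add:
  "open S \<Longrightarrow> smooth_on f S \<Longrightarrow> smooth_on g S \<Longrightarrow> smooth_on (\<lambda>x. f x + g x) S"
  by (rule smooth_closure_imp_smooth_on[of S "{}"]) (auto intro: smooth_closure.intros)

lemma smooth_on_mult:
  "open S \<Longrightarrow> smooth_on f S \<Longrightarrow> smooth_on g S \<Longrightarrow> smooth_on (\<lambda>x. f x * g x) S"
  by (rule smooth_closure_imp_smooth_on[of S "{}"]) (auto intro: smooth_closure.intros)

lemma smooth_on_cong: "open S \<Longrightarrow> smooth_on f S \<Longrightarrow> \<forall>x\<in>S. f x = g x \<Longrightarrow> smooth_on g S"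
  by (rule smooth_closure_imp_smooth_on[of S "{}"]) (auto intro: smooth_closure.intros)

lemma smooth_on_uminus: "open S \<Longrightarrow> smooth_on f S \<Longrightarrow> smooth_on (\<lambda>x. - f x) S"
  by (rule smooth_on_cong[OF _ smooth_on_mult[of S "\<lambda>x. -1" f]]) (auto intro: smooth_on_const)

lemma smooth_on_diff:
  "open S \<Longrightarrow> smooth_on f S \<Longrightarrow> smooth_on g S \<Longrightarrow> smooth_on (\<lambda>x. f x - g x) S"
  by (rule smooth_on_cong[OF _ smooth_on_add[OF _ _ smooth_on_uminus[of S g]], of f]) auto

lemma smooth_on_sum:
  assumes "open S" "finite I" "\<And>i. i \<in> I \<Longrightarrow> smooth_on (f i) S"
  shows "smooth_on (\<lambda>x. \<Sum>i\<in>I. f i x) S"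
  using assms(2,3) by (induction I rule: finite_induct) (auto intro: smooth_on_add smooth_on_const assms(1))

lemma smooth_on_prod:
  assumes "open S" "finite I" "\<And>i. i \<in> I \<Longrightarrow> smooth_on (f i) S"
  shows "smooth_on (\<lambda>x. \<Prod>i\<in>I. f i x) S"
  using assms(2,3) by (induction I rule: finite_induct) (auto intro: smooth_on_mult smooth_on_const assms(1))

lemma smooth_on_inverse:
  assumes S: "open S" and f: "smooth_on f S" and nz: "\<forall>x\<in>S. f x \<noteq> 0"
  shows "smooth_on (\<lambda>x. inverse (f x)) S"
proof (rule smooth_closure_imp_smooth_on[of S "{\<lambda>x. inverse (f x)}"])
  have deriv: "((\<lambda>x. inverse (f x)) has_derivative
      (\<lambda>h. - (inverse (f x) * frechet_derivative f (at x) h * inverse (f x)))) (at x)"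
    if "x \<in> S" for x
    using that nz smooth_on_differentiable[OF f]
    by (intro Deriv.has_derivative_inverse) (auto simp: frechet_derivative_works)
  then show "\<forall>g\<in>{\<lambda>x. inverse (f x)}. \<forall>x\<in>S. g differentiable at x"
    by (auto simp: differentiable_def)
  show "\<forall>g\<in>{\<lambda>x. inverse (f x)}. \<forall>w. smooth_closure S {\<lambda>x. inverse (f x)}
          (\<lambda>x. frechet_derivative g (at x) w)"
  proof (intro ballI allI)
    fix g w assume "g \<in> {\<lambda>x. inverse (f x)}"
    then have g: "g = (\<lambda>x. inverse (f x))" by simp
    have "smooth_closure S {\<lambda>x. inverse (f x)}
        (\<lambda>x. (-1) * (inverse (f x) * (frechet_derivative f (at x) w * inverse (f x))))"
      by (intro smooth_closure.mult smooth_closure.smooth smooth_on_const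
          smooth_on_frechet_derivative[OF f] smooth_closure.generator) auto
    then show "smooth_closure S {\<lambda>x. inverse (f x)} (\<lambda>x. frechet_derivative g (at x) w)"
      by (rule smooth_closure.cong) (auto simp: g deriv[THEN frechet_derivative_at, symmetric])
  qed
qed (auto intro: S smooth_closure.generator)

lemma smooth_on_divide:
  "open S \<Longrightarrow> smooth_on g S \<Longrightarrow> smooth_on f S \<Longrightarrow> \<forall>x\<in>S. f x \<noteq> 0 \<Longrightarrow>
   smooth_on (\<lambda>x. g x / f x) S"
  using smooth_on_mult[OF _ _ smooth_on_inverse[of S f], of g] by (simp add: divide_inverse)

lemma smooth_on_sqrt:
  assumes S: "open S" and f: "smooth_on f S" and pos: "\<forall>x\<in>S. f x > 0"
  shows "smooth_on (\<lambda>x. sqrt (f x)) S"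
proof (rule smooth_closure_imp_smooth_on[of S "{\<lambda>x. sqrt (f x), \<lambda>x. inverse (sqrt (f x))}"])
  let ?G = "{\<lambda>x. sqrt (f x), \<lambda>x. inverse (sqrt (f x))}"
  have deriv_sqrt: "((\<lambda>x. sqrt (f x)) has_derivative
      (\<lambda>h. frechet_derivative f (at x) h * (inverse (sqrt (f x)) / 2))) (at x)" if "x \<in> S" for x
    using that pos smooth_on_differentiable[OF f]
    by (intro DERIV_real_sqrt[THEN DERIV_compose_FDERIV]) (auto simp: frechet_derivative_works)
  have deriv_inverse: "((\<lambda>x. inverse (sqrt (f x))) has_derivative
      (\<lambda>h. - (inverse (sqrt (f x)) * (frechet_derivative f (at x) h * (inverse (sqrt (f x)) / 2))
             * inverse (sqrt (f x))))) (at x)" if "x \<in> S" for x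
    using that pos deriv_sqrt by (intro Deriv.has_derivative_inverse) auto
  show "\<forall>g\<in>?G. \<forall>x\<in>S. g differentiable at x"
    using deriv_sqrt deriv_inverse by (auto simp: differentiable_def)
  show "\<forall>g\<in>?G. \<forall>w. smooth_closure S ?G (\<lambda>x. frechet_derivative g (at x) w)"
  proof (intro ballI allI)
    fix g w assume "g \<in> ?G"
    then consider "g = (\<lambda>x. sqrt (f x))" | "g = (\<lambda>x. inverse (sqrt (f x)))" by blast
    then show "smooth_closure S ?G (\<lambda>x. frechet_derivative g (at x) w)"
    proof cases
      case 1
      have "smooth_closure S ?G (\<lambda>x. frechet_derivative f (at x) w * ((1/2) * inverse (sqrt (f x))))"
        by (intro smooth_closure.mult smooth_closure.smooth smooth_on_const
            smooth_on_frechet_derivative[OF f] smooth_closure.generator) auto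
      then show ?thesis
        by (rule smooth_closure.cong) (auto simp: 1 deriv_sqrt[THEN frechet_derivative_at, symmetric])
    next
      case 2
      have "smooth_closure S ?G (\<lambda>x. (-1/2) * (inverse (sqrt (f x)) * (inverse (sqrt (f x))
          * (inverse (sqrt (f x)) * frechet_derivative f (at x) w))))"
        by (intro smooth_closure.mult smooth_closure.smooth smooth_on_const
            smooth_on_frechet_derivative[OF f] smooth_closure.generator) auto
      then show ?thesis
        by (rule smooth_closure.cong)
          (auto simp: 2 deriv_inverse[THEN frechet_derivative_at, symmetric])
    qed
  qed
qed (auto intro: S smooth_closure.generator)

lemma smooth_on_bounded_linear: "bounded_linear L \<Longrightarrow> smooth_on L S"
proof (rule smooth_on.intros)
  assume L: "bounded_linear L"
  then have "frechet_derivative L (at x) = L" for x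
    using bounded_linear_imp_has_derivative frechet_derivative_at by metis
  then show "\<forall>w. smooth_on (\<lambda>x. frechet_derivative L (at x) w) S"
    by (simp add: smooth_on_const)
  show "\<forall>x\<in>S. L differentiable at x"
    using L bounded_linear_imp_differentiable by blast
qed

lemma smooth_on_component: "smooth_on (\<lambda>x. x $ i) S"
  by (rule smooth_on_bounded_linear) (rule bounded_linear_vec_nth)

lemma smooth_on_compose_linear:
  fixes L :: "real^'m::finite \<Rightarrow> real^'n::finite"
  assumes f: "smooth_on f S" and L: "bounded_linear L" and T: "open T" and LT: "\<forall>x\<in>T. L x \<in> S"
  shows "smooth_on (\<lambda>x. f (L x)) T"
proof -
  define X where "X h T' \<longleftrightarrow> T' = T \<and> (\<exists>f. smooth_on f S \<and> (\<forall>x\<in>T. h x = f (L x)))" for h T'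
  have "X (\<lambda>x. f (L x)) T" unfolding X_def using f by blast
  then show ?thesis
  proof (rule smooth_on.coinduct[of X])
    fix h T' assume "X h T'"
    then obtain f where T': "T' = T" and f: "smooth_on f S" and h: "\<forall>x\<in>T. h x = f (L x)"
      unfolding X_def by blast
    have "((\<lambda>x. f (L x)) has_derivative (\<lambda>v. frechet_derivative f (at (L x)) (L v))) (at x)"
      if "x \<in> T" for x
      using has_derivative_compose[OF bounded_linear.has_derivative[OF L has_derivative_ident], of f]
        smooth_on_differentiable[OF f] LT that by (auto simp: frechet_derivative_works comp_def)
    then have deriv: "(h has_derivative (\<lambda>v. frechet_derivative f (at (L x)) (L v))) (at x)"
      if "x \<in> T" for x
      using has_derivative_transform_within_open[OF _ T that] h that by metis
    have "X (\<lambda>x. frechet_derivative h (at x) w) T" for w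
      unfolding X_def
      by (rule conjI[OF refl], rule exI[of _ "\<lambda>y. frechet_derivative f (at y) (L w)"])
        (auto simp: smooth_on_frechet_derivative[OF f] deriv[THEN frechet_derivative_at, symmetric])
    then show "\<exists>S f. h = f \<and> T' = S \<and> (\<forall>x\<in>S. f differentiable at x) \<and>
        (\<forall>w. X (\<lambda>x. frechet_derivative f (at x) w) S \<or>
             smooth_on (\<lambda>x. frechet_derivative f (at x) w) S)"
      using deriv T' by (auto simp: differentiable_def)
  qed
qed

lemma smooth_on_subset: "smooth_on f S \<Longrightarrow> open T \<Longrightarrow> T \<subseteq> S \<Longrightarrow> smooth_on f T"
  using smooth_on_compose_linear[of f S "\<lambda>x. x" T] by auto

lemma smooth_on_det:
  "open S \<Longrightarrow> \<forall>i j. smooth_on (\<lambda>x. A x $ i $ j) S \<Longrightarrow> smooth_on (\<lambda>x. det (A x)) S"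
  unfolding det_def by (intro smooth_on_sum smooth_on_mult smooth_on_prod smooth_on_const) auto

lemma smooth_on_matrix_vector_mult:
  "open S \<Longrightarrow> \<forall>i j. smooth_on (\<lambda>x. A x $ i $ j) S \<Longrightarrow> \<forall>j. smooth_on (\<lambda>x. w x $ j) S \<Longrightarrow>
   smooth_on (\<lambda>x. (A x *v w x) $ i) S"
  unfolding matrix_vector_mult_def by (simp, intro smooth_on_sum smooth_on_mult) auto

lemma smooth_on_inner:
  "open S \<Longrightarrow> \<forall>i. smooth_on (\<lambda>x. u x $ i) S \<Longrightarrow> \<forall>i. smooth_on (\<lambda>x. w x $ i) S \<Longrightarrow>
   smooth_on (\<lambda>x. u x \<bullet> w x) S"
  unfolding inner_vec_def by (intro smooth_on_sum) (auto intro: smooth_on_mult)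

section \<open>Coordinate calculus\<close>

lemma flat_eq_matrix_vector_mult: "flat g w x = g x *v w x"
  by (simp add: flat_def matrix_vector_mult_def)

lemma pd_cong_open: "open S \<Longrightarrow> x \<in> S \<Longrightarrow> \<forall>y\<in>S. f y = g y \<Longrightarrow> pd i f x = pd i g x"
  unfolding pd_def using frechet_derivative_cong_open by metis

lemma pd_add:
  "f differentiable (at x) \<Longrightarrow> g differentiable (at x) \<Longrightarrow>
   pd i (\<lambda>y. f y + g y) x = pd i f x + pd i g x"
  unfolding pd_def by (rule frechet_derivative_add_at)

lemma pd_diff:
  "f differentiable (at x) \<Longrightarrow> g differentiable (at x) \<Longrightarrow>
   pd i (\<lambda>y. f y - g y) x = pd i f x - pd i g x"
  unfolding pd_def by (rule frechet_derivative_diff_at)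

lemma pd_mult:
  "f differentiable (at x) \<Longrightarrow> g differentiable (at x) \<Longrightarrow>
   pd i (\<lambda>y. f y * g y) x = f x * pd i g x + pd i f x * g x"
  unfolding pd_def by (rule frechet_derivative_mult_at)

lemma pd_component: "pd i (\<lambda>y. y $ j) x = (if i = j then 1 else 0)"
proof -
  have "((\<lambda>y. y $ j) has_derivative (\<lambda>y. y $ j)) (at x)"
    by (rule bounded_linear_imp_has_derivative) (rule bounded_linear_vec_nth)
  then show ?thesis unfolding pd_def by (auto simp: axis_def dest: frechet_derivative_at)
qed

lemma differentiable_component: "(\<lambda>y. y $ k) differentiable (at x)"
  by (rule bounded_linear_imp_differentiable) (rule bounded_linear_vec_nth)

lemma pd_add_component_mult:
  assumes "x $ k = 0" "f differentiable (at x)" "h differentiable (at x)"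
  shows "pd i (\<lambda>y. f y + y $ k * h y) x = pd i f x + (if i = k then h x else 0)"
  using assms by (simp add: pd_add pd_mult pd_component differentiable_mult differentiable_component)

lemma dform_add_component_mult:
  assumes x: "x $ k = 0"
    and \<alpha>: "\<forall>j. (\<lambda>y. \<alpha> y $ j) differentiable (at x)"
    and \<beta>: "\<forall>j. (\<lambda>y. \<beta> y $ j) differentiable (at x)"
  shows "dform (\<lambda>y. \<alpha> y + y $ k *\<^sub>R \<beta> y) X Y x
           = dform \<alpha> X Y x + X $ k * (\<beta> x \<bullet> Y) - Y $ k * (\<beta> x \<bullet> X)"
proof -
  have "dform (\<lambda>y. \<alpha> y + y $ k *\<^sub>R \<beta> y) X Y x = dform \<alpha> X Y x
      + (\<Sum>i\<in>UNIV. \<Sum>j\<in>UNIV. (if i = k then \<beta> x $ j else 0) * (X $ i * Y $ j - X $ j * Y $ i))"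
    using x \<alpha> \<beta>
    by (simp add: dform_def pd_add_component_mult distrib_right sum.distrib)
  also have "(\<Sum>i\<in>UNIV. \<Sum>j\<in>UNIV. (if i = k then \<beta> x $ j else 0) * (X $ i * Y $ j - X $ j * Y $ i))
      = (\<Sum>j\<in>UNIV. \<beta> x $ j * (X $ k * Y $ j - X $ j * Y $ k))"
    by (subst sum.swap) (simp add: if_distrib[of "\<lambda>a. a * _"] cong: if_cong)
  finally show ?thesis
    by (simp add: inner_vec_def sum_distrib_left sum_subtractf algebra_simps)
qed

lemma divg_add_component_mult:
  assumes x: "x $ k = 0" and det: "det (g x) > 0"
    and vol: "(\<lambda>y. sqrt (det (g y))) differentiable (at x)"
    and w: "\<forall>i. (\<lambda>y. w y $ i) differentiable (at x)"
    and z: "\<forall>i. (\<lambda>y. z y $ i) differentiable (at x)"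
  shows "divg g (\<lambda>y. w y + y $ k *\<^sub>R z y) x = divg g w x + z x $ k"
proof -
  let ?\<rho> = "\<lambda>y. sqrt (det (g y))"
  have "(\<lambda>y. ?\<rho> y * (w y + y $ k *\<^sub>R z y) $ i) = (\<lambda>y. ?\<rho> y * w y $ i + y $ k * (?\<rho> y * z y $ i))"
    for i by (simp add: algebra_simps)
  then have "divg g (\<lambda>y. w y + y $ k *\<^sub>R z y) x = 1 / ?\<rho> x *
      (\<Sum>i\<in>UNIV. pd i (\<lambda>y. ?\<rho> y * w y $ i) x + (if i = k then ?\<rho> x * z x $ i else 0))"
    using x vol w z by (simp add: divg_def pd_add_component_mult differentiable_mult)
  then show ?thesis
    using det by (simp add: divg_def sum.distrib field_simps)
qed

lemma smooth_on_divg: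
  assumes S: "open S" and g: "\<forall>i j. smooth_on (\<lambda>x. g x $ i $ j) S"
    and det: "\<forall>x\<in>S. det (g x) > 0" and w: "\<forall>i. smooth_on (\<lambda>x. w x $ i) S"
  shows "smooth_on (divg g w) S"
proof -
  have "smooth_on (\<lambda>x. sqrt (det (g x))) S"
    using S det by (intro smooth_on_sqrt smooth_on_det g)
  moreover have "\<forall>x\<in>S. sqrt (det (g x)) \<noteq> 0"
    using det by fastforce
  ultimately show ?thesis
    unfolding divg_def[abs_def] using S w
    by (intro smooth_on_mult smooth_on_divide smooth_on_const smooth_on_sum smooth_on_pd) auto
qed

lemma curl_cong_open:
  assumes "open S" "x \<in> S" "\<forall>y\<in>S. F y = G y"
  shows "curl g0 b F x = curl g0 b G x"
proof -
  have "pd i (\<lambda>y. flat g0 F y $ j) x = pd i (\<lambda>y. flat g0 G y $ j) x" for i j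
    using assms by (intro pd_cong_open[OF assms(1,2)]) (simp add: flat_def)
  then show ?thesis unfolding curl_def dform_def by simp
qed

lemma divg_cong_open:
  assumes "open S" "x \<in> S" "\<forall>y\<in>S. F y = G y"
  shows "divg g F x = divg g G x"
proof -
  have "pd i (\<lambda>y. sqrt (det (g y)) * F y $ i) x = pd i (\<lambda>y. sqrt (det (g y)) * G y $ i) x" for i
    using assms by (intro pd_cong_open[OF assms(1,2)]) simp
  then show ?thesis unfolding divg_def by simp
qed

section \<open>Orthonormal frames\<close>

lemma axis_inner_matrix_vector_mult: "axis i 1 \<bullet> (A *v axis j 1) = (A :: real^'n^'n) $ i $ j"
  by (simp add: inner_axis' matrix_vector_mult_basis column_def)

lemma inner_matrix_vector_mult_symmetric:
  fixes A :: "real^'n^'n"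
  assumes "\<forall>i j. A $ i $ j = A $ j $ i"
  shows "(A *v u) \<bullet> w = u \<bullet> (A *v w)"
proof -
  have "transpose A = A" using assms by (simp add: transpose_def vec_eq_iff)
  then show ?thesis
    by (metis dot_lmul_matrix inner_commute vector_transpose_matrix)
qed

lemma positive_definite_minor_pos:
  fixes G :: "real^'n^'n"
  assumes pos: "\<forall>\<xi>. \<xi> \<noteq> 0 \<longrightarrow> \<xi> \<bullet> (G *v \<xi>) > 0" and sym: "G $ i $ j = G $ j $ i" and "i \<noteq> j"
  shows "G $ i $ i * G $ j $ j - G $ i $ j * G $ j $ i > 0"
proof -
  have quadratic_form: "(a *\<^sub>R axis i 1 + c *\<^sub>R axis j 1) \<bullet> (G *v (a *\<^sub>R axis i 1 + c *\<^sub>R axis j 1))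
      = a * a * G $ i $ i + a * c * G $ i $ j + c * a * G $ j $ i + c * c * G $ j $ j" for a c
    by (simp add: matrix_vector_right_distrib matrix_vector_mult_scaleR inner_add_left
        inner_add_right axis_inner_matrix_vector_mult algebra_simps)
  have Gii: "G $ i $ i > 0"
    using pos[rule_format, of "axis i 1"] quadratic_form[of 1 0] by simp
  let ?\<xi> = "G $ i $ j *\<^sub>R axis i 1 + (- G $ i $ i) *\<^sub>R axis j (1::real)"
  have "?\<xi> $ j \<noteq> 0" using Gii \<open>i \<noteq> j\<close> by (simp add: axis_def)
  then have "?\<xi> \<noteq> 0" by (metis zero_index)
  then have "?\<xi> \<bullet> (G *v ?\<xi>) > 0" using pos by blast
  also have "?\<xi> \<bullet> (G *v ?\<xi>) = G $ i $ i * (G $ i $ i * G $ j $ j - G $ i $ j * G $ j $ i)"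
    unfolding quadratic_form using sym by (simp add: algebra_simps)
  finally show ?thesis using Gii by (simp add: zero_less_mult_iff)
qed

definition frame_matrix :: "('n \<Rightarrow> real^'n) \<Rightarrow> real^'n^'n" where
  "frame_matrix e = (\<chi> i k. e k $ i)"

definition orthonormal_frame :: "real^'n^'n \<Rightarrow> ('n \<Rightarrow> real^'n) \<Rightarrow> bool" where
  "orthonormal_frame G e \<longleftrightarrow> (\<forall>k l. e k \<bullet> (G *v e l) = (if k = l then 1 else 0))"

lemma orthonormal_frame_matrix:
  assumes "orthonormal_frame G e"
  shows "transpose (frame_matrix e) ** G ** frame_matrix e = mat 1"
proof -
  have "(transpose (frame_matrix e) ** G ** frame_matrix e) $ k $ l = e k \<bullet> (G *v e l)" for k l
    unfolding frame_matrix_def matrix_matrix_mult_def matrix_vector_mult_def inner_vec_def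
      transpose_def
    by (simp add: sum_distrib_left sum_distrib_right mult.assoc) (rule sum.swap)
  then show ?thesis using assms by (simp add: orthonormal_frame_def vec_eq_iff mat_def)
qed

lemma orthonormal_frame_det: "orthonormal_frame G e \<Longrightarrow> det (frame_matrix e) ^ 2 * det G = 1"
  using arg_cong[OF orthonormal_frame_matrix, of G e det]
  by (simp add: det_mul det_transpose power2_eq_square algebra_simps)

lemma orthonormal_frame_det_pos: "orthonormal_frame G e \<Longrightarrow> det G > 0"
  using orthonormal_frame_det[of G e] by (smt (verit) mult_nonneg_nonpos zero_le_power2)

lemma orthonormal_frame_expansion:
  assumes "orthonormal_frame G e"
  shows "w = (\<Sum>k\<in>UNIV. (e k \<bullet> (G *v w)) *\<^sub>R e k)"
proof -
  let ?B = "frame_matrix e"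
  have "?B ** (transpose ?B ** G) = mat 1"
    using orthonormal_frame_matrix[OF assms] matrix_left_right_inverse by (metis matrix_mul_assoc)
  then have "w = ?B *v (transpose ?B *v (G *v w))"
    by (metis matrix_vector_mul_assoc matrix_vector_mul_lid)
  also have "\<dots> = (\<Sum>k\<in>UNIV. (e k \<bullet> (G *v w)) *\<^sub>R e k)"
    by (simp add: frame_matrix_def matrix_vector_mult_def inner_vec_def vec_eq_iff transpose_def
        sum_distrib_right mult.commute)
  finally show ?thesis .
qed

lemma orthonormal_frame_transversal:
  assumes "orthonormal_frame G e" and "\<forall>k. k \<noteq> m \<longrightarrow> e k $ i = 0"
  shows "e m $ i \<noteq> 0"
proof
  assume "e m $ i = 0"
  then have "row i (frame_matrix e) = 0"
    using assms(2) by (auto simp: row_def frame_matrix_def vec_eq_iff)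
  then have "det (frame_matrix e) = 0" by (rule det_zero_row)
  then show False using orthonormal_frame_det[OF assms(1)] by simp
qed

section \<open>The slice chart\<close>

definition slice_coord :: "real^3 \<Rightarrow> real^2" where
  "slice_coord x = (\<chi> a. x $ idx a)"

definition slice_proj :: "real^3 \<Rightarrow> real^3" where
  "slice_proj x = emb (slice_coord x)"

lemma idx_simps [simp]: "idx 1 = 1" "idx 2 = 2"
  unfolding idx_def by auto

lemma emb_component [simp]: "emb y $ idx a = y $ a" "emb y $ 3 = 0"
  unfolding emb_def idx_def using exhaust_2[of a] by auto

lemma slice_coord_component [simp]: "slice_coord x $ a = x $ idx a"
  unfolding slice_coord_def by simp

lemma slice_coord_emb [simp]: "slice_coord (emb y) = y"
  by (simp add: vec_eq_iff)

lemma slice_proj_emb [simp]: "slice_proj (emb y) = emb y"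
  by (simp add: slice_proj_def)

lemma slice_proj_idem [simp]: "slice_proj (slice_proj x) = slice_proj x"
  by (simp add: slice_proj_def)

lemma slice_proj_axis: "slice_proj (axis i 1) = (if i = 3 then 0 else axis i 1)"
  unfolding slice_proj_def emb_def slice_coord_def idx_def axis_def
  using exhaust_3[of i] by (auto simp: vec_eq_iff)

lemma emb_axis: "emb (axis a 1) = axis (idx a) 1"
  unfolding emb_def idx_def axis_def using exhaust_2[of a] by (auto simp: vec_eq_iff)

lemma bounded_linear_slice_coord: "bounded_linear slice_coord"
  by (rule linear_conv_bounded_linear[THEN iffD1], rule linearI) (auto simp: vec_eq_iff)

lemma bounded_linear_emb: "bounded_linear emb"
  by (rule linear_conv_bounded_linear[THEN iffD1], rule linearI) (auto simp: vec_eq_iff emb_def)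

lemma bounded_linear_slice_proj: "bounded_linear slice_proj"
  unfolding slice_proj_def[abs_def]
  using bounded_linear_compose[OF bounded_linear_emb bounded_linear_slice_coord] by (simp add: o_def)

lemma pd_compose_emb:
  "f differentiable (at (emb y)) \<Longrightarrow> pd a (\<lambda>y. f (emb y)) y = pd (idx a) f (emb y)"
  unfolding pd_def by (simp add: frechet_derivative_compose_linear[OF bounded_linear_emb] emb_axis)

lemma pd_compose_slice_proj:
  assumes "f differentiable (at (slice_proj x))"
  shows "pd i (\<lambda>y. f (slice_proj y)) x = (if i = 3 then 0 else pd i f (slice_proj x))"
  using assms linear_0[OF linear_frechet_derivative[OF assms]] unfolding pd_def
  by (simp add: frechet_derivative_compose_linear[OF bounded_linear_slice_proj] slice_proj_axis)

lemma pd_slice_proj_invariant: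
  assumes "\<forall>y. f (slice_proj y) = f y" "f differentiable (at (slice_proj x))"
  shows "pd i f x = pd i f (slice_proj x)"
proof -
  have f: "(\<lambda>y. f (slice_proj y)) = f"
    using assms(1) by auto
  have "pd i f x = pd i (\<lambda>y. f (slice_proj y)) x"
    by (simp only: f)
  also have "\<dots> = pd i (\<lambda>y. f (slice_proj y)) (slice_proj x)"
    using assms(2) by (simp add: pd_compose_slice_proj)
  also have "\<dots> = pd i f (slice_proj x)"
    by (simp only: f)
  finally show ?thesis .
qed

section \<open>Extensions off the slice\<close>

locale adapted_chart =
  fixes U :: "(real^3) set" and g0 :: "real^3 \<Rightarrow> real^3^3"
    and b :: "3 \<Rightarrow> real^3 \<Rightarrow> real^3" and v1 v2 :: "real^2 \<Rightarrow> real"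
  assumes U_open: "open U"
    and g0_smooth: "smooth_on (\<lambda>x. g0 x $ i $ j) U"
    and g0_sym: "x \<in> U \<Longrightarrow> g0 x $ i $ j = g0 x $ j $ i"
    and g0_pos: "x \<in> U \<Longrightarrow> \<xi> \<noteq> 0 \<Longrightarrow> \<xi> \<bullet> (g0 x *v \<xi>) > 0"
    and b_smooth: "smooth_on (\<lambda>x. b k x $ i) U"
    and b_orthonormal: "x \<in> U \<Longrightarrow> orthonormal_frame (g0 x) (\<lambda>k. b k x)"
    and b_adapted: "emb y \<in> U \<Longrightarrow> b 1 (emb y) $ 3 = 0" "emb y \<in> U \<Longrightarrow> b 2 (emb y) $ 3 = 0"
    and v_smooth: "smooth_on v1 {y. emb y \<in> U}" "smooth_on v2 {y. emb y \<in> U}"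
begin

definition M :: "(real^2) set" where
  "M = {y. emb y \<in> U}"

definition N :: "(real^3) set" where
  "N = {x \<in> U. slice_proj x \<in> U}"

lemma open_M: "open M"
  using continuous_open_preimage[OF linear_continuous_on[OF bounded_linear_emb] open_UNIV U_open]
  by (simp add: M_def vimage_def)

lemma open_N: "open N"
proof -
  have "N = U \<inter> slice_proj -` U" unfolding N_def by auto
  then show ?thesis
    using continuous_open_preimage[OF linear_continuous_on[OF bounded_linear_slice_proj] open_UNIV U_open]
      U_open by auto
qed

lemma N_subset_U: "N \<subseteq> U"
  and slice_proj_in_N: "x \<in> N \<Longrightarrow> slice_proj x \<in> N"
  and slice_coord_in_M: "x \<in> N \<Longrightarrow> slice_coord x \<in> M"
  and emb_in_N: "y \<in> M \<Longrightarrow> emb y \<in> N"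
  and emb_in_U: "y \<in> M \<Longrightarrow> emb y \<in> U"
  unfolding N_def M_def by (auto simp: slice_proj_def)

lemma emb_image_M_subset_N: "emb ` M \<subseteq> N"
  using emb_in_N by blast

lemma smooth_on_N: "smooth_on f U \<Longrightarrow> smooth_on f N"
  using smooth_on_subset open_N N_subset_U by blast

lemma smooth_on_compose_slice_proj: "smooth_on f N \<Longrightarrow> smooth_on (\<lambda>x. f (slice_proj x)) N"
  using smooth_on_compose_linear bounded_linear_slice_proj open_N slice_proj_in_N by blast

lemma smooth_on_compose_slice_coord: "smooth_on f M \<Longrightarrow> smooth_on (\<lambda>x. f (slice_coord x)) N"
  using smooth_on_compose_linear bounded_linear_slice_coord open_N slice_coord_in_M by blast

lemma smooth_on_compose_emb: "smooth_on f N \<Longrightarrow> smooth_on (\<lambda>y. f (emb y)) M"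
  using smooth_on_compose_linear bounded_linear_emb open_M emb_in_N by blast

lemmas smooth_on_intros = smooth_on_add smooth_on_diff smooth_on_mult smooth_on_divide
  smooth_on_sum smooth_on_const smooth_on_component smooth_on_pd smooth_on_N
  smooth_on_compose_slice_proj smooth_on_compose_slice_coord smooth_on_compose_emb
  g0_smooth b_smooth v_smooth[folded M_def] open_M open_N finite

lemma b_adapted_M: "y \<in> M \<Longrightarrow> b 1 (emb y) $ 3 = 0" "y \<in> M \<Longrightarrow> b 2 (emb y) $ 3 = 0"
  using b_adapted by (auto simp: M_def)

lemma b3_transversal: "y \<in> M \<Longrightarrow> b 3 (emb y) $ 3 \<noteq> 0"
  using orthonormal_frame_transversal[OF b_orthonormal[OF emb_in_U], of y 3 3] b_adapted_M
    exhaust_3 by metis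

lemma b_orthonormal_inner: "x \<in> U \<Longrightarrow> b k x \<bullet> (g0 x *v b l x) = (if k = l then 1 else 0)"
  using b_orthonormal by (simp add: orthonormal_frame_def)

definition vol :: "real^3 \<Rightarrow> real" where
  "vol x = sqrt (det (g0 x))"

lemma vol_pos: "x \<in> U \<Longrightarrow> vol x > 0"
  unfolding vol_def using orthonormal_frame_det_pos[OF b_orthonormal] by simp

lemma smooth_on_vol: "smooth_on vol U"
  unfolding vol_def[abs_def]
  using U_open orthonormal_frame_det_pos[OF b_orthonormal]
  by (intro smooth_on_sqrt smooth_on_det allI g0_smooth) auto

lemma det_induced_pos: "y \<in> M \<Longrightarrow> det (induced g0 y) > 0"
  using positive_definite_minor_pos[of "g0 (emb y)" 1 2] g0_pos g0_sym emb_in_U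
  unfolding det_2 induced_def by auto

definition frame_coeff :: "(real^3 \<Rightarrow> real^3) \<Rightarrow> 3 \<Rightarrow> real^3 \<Rightarrow> real" where
  "frame_coeff w k x = b k x \<bullet> (g0 x *v w x)"

lemma frame_field_frame_coeff: "x \<in> U \<Longrightarrow> frame_field b (frame_coeff w) x = w x"
  using orthonormal_frame_expansion[OF b_orthonormal] by (simp add: frame_field_def frame_coeff_def)

lemma curl_frame_field_frame_coeff:
  "x \<in> U \<Longrightarrow> curl g0 b (frame_field b (frame_coeff w)) x = curl g0 b w x"
  using curl_cong_open[OF U_open] frame_field_frame_coeff by blast

lemma divg_frame_field_frame_coeff:
  "x \<in> U \<Longrightarrow> divg g0 (frame_field b (frame_coeff w)) x = divg g0 w x"
  using divg_cong_open[OF U_open] frame_field_frame_coeff by blast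

definition v_field :: "real^2 \<Rightarrow> real^2" where
  "v_field y = v1 y *\<^sub>R restr (b 1) y + v2 y *\<^sub>R restr (b 2) y"

definition v_ext :: "real^3 \<Rightarrow> real^3" where
  "v_ext x = v1 (slice_coord x) *\<^sub>R b 1 (slice_proj x) + v2 (slice_coord x) *\<^sub>R b 2 (slice_proj x)"

lemma v_ext_emb: "v_ext (emb y) = v1 y *\<^sub>R b 1 (emb y) + v2 y *\<^sub>R b 2 (emb y)"
  by (simp add: v_ext_def)

lemma v_ext_slice_proj: "v_ext (slice_proj x) = v_ext x"
  by (simp add: v_ext_def slice_proj_def)

lemma frame_coeff_extension:
  assumes w: "\<And>i. smooth_on (\<lambda>x. w x $ i) N" and w_M: "\<And>y. y \<in> M \<Longrightarrow> w (emb y) = v_ext (emb y)"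
  shows "(\<forall>k. smooth_on (frame_coeff w k) N) \<and>
    (\<forall>y\<in>M. frame_coeff w 3 (emb y) = 0 \<and> frame_coeff w 1 (emb y) = v1 y \<and> frame_coeff w 2 (emb y) = v2 y)"
proof (intro conjI allI ballI)
  show "smooth_on (frame_coeff w k) N" for k
    unfolding frame_coeff_def[abs_def]
    by (intro smooth_on_inner smooth_on_matrix_vector_mult smooth_on_intros w allI)
  fix y assume y: "y \<in> M"
  show "frame_coeff w 3 (emb y) = 0" "frame_coeff w 1 (emb y) = v1 y" "frame_coeff w 2 (emb y) = v2 y"
    using b_orthonormal_inner[OF emb_in_U[OF y]]
    by (simp_all add: frame_coeff_def w_M[OF y] v_ext_emb matrix_vector_right_distrib
        matrix_vector_mult_scaleR inner_add_right)
qed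

lemma smooth_on_v_ext: "smooth_on (\<lambda>x. v_ext x $ i) N"
  unfolding v_ext_def by (simp, intro smooth_on_intros)

lemma smooth_on_v_field: "smooth_on (\<lambda>y. v_field y $ a) M"
  unfolding v_field_def restr_def by (simp, intro smooth_on_intros)

lemma smooth_on_induced: "smooth_on (\<lambda>y. induced g0 y $ a $ c) M"
  unfolding induced_def by (simp, intro smooth_on_intros)

lemma flat_induced_v_field:
  "y \<in> M \<Longrightarrow> flat (induced g0) v_field y $ c = flat g0 v_ext (emb y) $ idx c"
  unfolding flat_def induced_def v_ext_emb v_field_def restr_def
  using b_adapted_M[of y] exhaust_2[of c] by (auto simp: sum_2 sum_3 algebra_simps)

lemma smooth_on_flat_v_ext: "smooth_on (\<lambda>x. flat g0 v_ext x $ j) N"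
  unfolding flat_eq_matrix_vector_mult
  by (intro smooth_on_matrix_vector_mult smooth_on_v_ext smooth_on_intros allI)

lemma rot_v_field:
  assumes y: "y \<in> M"
  shows "rot (induced g0) (restr (b 1)) (restr (b 2)) v_field y
           = dform (flat g0 v_ext) (b 1 (emb y)) (b 2 (emb y)) (emb y)"
proof -
  have "pd a (\<lambda>y. flat (induced g0) v_field y $ c) y
      = pd (idx a) (\<lambda>x. flat g0 v_ext x $ idx c) (emb y)" for a c
  proof -
    have "pd a (\<lambda>y. flat (induced g0) v_field y $ c) y = pd a (\<lambda>y. flat g0 v_ext (emb y) $ idx c) y"
      by (rule pd_cong_open[OF open_M y]) (simp add: flat_induced_v_field)
    also have "\<dots> = pd (idx a) (\<lambda>x. flat g0 v_ext x $ idx c) (emb y)"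
      by (rule pd_compose_emb) (rule smooth_on_differentiable[OF smooth_on_flat_v_ext emb_in_N[OF y]])
    finally show ?thesis .
  qed
  then show ?thesis
    using b_adapted_M[OF y] by (simp add: rot_def dform_def restr_def sum_2 sum_3)
qed

subsection \<open>Prescribed curl and divergence along the slice\<close>

definition curl_corr1 :: "real^2 \<Rightarrow> real" where
  "curl_corr1 y = - dform (flat g0 v_ext) (b 3 (emb y)) (b 1 (emb y)) (emb y) / b 3 (emb y) $ 3"

definition curl_corr2 :: "real^2 \<Rightarrow> real" where
  "curl_corr2 y = dform (flat g0 v_ext) (b 2 (emb y)) (b 3 (emb y)) (emb y) / b 3 (emb y) $ 3"

definition div_corr :: "real^2 \<Rightarrow> real" where
  "div_corr y = (divg (induced g0) v_field y - divg g0 v_ext (emb y)) / b 3 (emb y) $ 3"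

definition correction :: "real^3 \<Rightarrow> real^3" where
  "correction x = curl_corr1 (slice_coord x) *\<^sub>R b 1 (slice_proj x)
     + curl_corr2 (slice_coord x) *\<^sub>R b 2 (slice_proj x) + div_corr (slice_coord x) *\<^sub>R b 3 (slice_proj x)"

definition curl_ext :: "real^3 \<Rightarrow> real^3" where
  "curl_ext x = v_ext x + x $ 3 *\<^sub>R correction x"

lemma curl_ext_emb: "curl_ext (emb y) = v_ext (emb y)"
  by (simp add: curl_ext_def)

lemma smooth_on_dform_v_ext: "smooth_on (\<lambda>y. dform (flat g0 v_ext) (b k (emb y)) (b l (emb y)) (emb y)) M"
  unfolding dform_def by (intro smooth_on_intros smooth_on_flat_v_ext)

lemma smooth_on_divg_v_ext: "smooth_on (\<lambda>y. divg g0 v_ext (emb y)) M"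
  using orthonormal_frame_det_pos[OF b_orthonormal] N_subset_U
  by (intro smooth_on_intros smooth_on_divg smooth_on_v_ext allI) auto

lemma smooth_on_divg_v_field: "smooth_on (divg (induced g0) v_field) M"
  using det_induced_pos by (intro smooth_on_divg smooth_on_induced smooth_on_v_field open_M allI) auto

lemma smooth_on_correction: "smooth_on (\<lambda>x. correction x $ i) N"
proof -
  have nz: "\<forall>y\<in>M. b 3 (emb y) $ 3 \<noteq> 0"
    using b3_transversal by blast
  have b33: "smooth_on (\<lambda>y. b 3 (emb y) $ 3) M"
    by (intro smooth_on_intros)
  have "smooth_on curl_corr1 M"
    unfolding curl_corr1_def[abs_def]
    by (rule smooth_on_divide[OF open_M smooth_on_uminus[OF open_M smooth_on_dform_v_ext] b33 nz])
  moreover have "smooth_on curl_corr2 M"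
    unfolding curl_corr2_def[abs_def]
    by (rule smooth_on_divide[OF open_M smooth_on_dform_v_ext b33 nz])
  moreover have "smooth_on div_corr M"
    unfolding div_corr_def[abs_def]
    by (rule smooth_on_divide[OF open_M smooth_on_diff[OF open_M smooth_on_divg_v_field
            smooth_on_divg_v_ext] b33 nz])
  ultimately show ?thesis
    unfolding correction_def by (simp, intro smooth_on_intros)
qed

lemma smooth_on_curl_ext: "smooth_on (\<lambda>x. curl_ext x $ i) N"
  unfolding curl_ext_def by (simp, intro smooth_on_intros smooth_on_v_ext smooth_on_correction)

lemma inner_g0_correction:
  assumes y: "y \<in> M"
  shows "(g0 (emb y) *v correction (emb y)) \<bullet> b 1 (emb y) = curl_corr1 y"
    "(g0 (emb y) *v correction (emb y)) \<bullet> b 2 (emb y) = curl_corr2 y"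
    "(g0 (emb y) *v correction (emb y)) \<bullet> b 3 (emb y) = div_corr y"
  using b_orthonormal_inner[OF emb_in_U[OF y]] g0_sym[OF emb_in_U[OF y]]
  by (simp_all add: inner_matrix_vector_mult_symmetric correction_def inner_add_left
      matrix_vector_right_distrib matrix_vector_mult_scaleR)

lemma curl_curl_ext:
  assumes y: "y \<in> M"
  shows "curl g0 b curl_ext (emb y)
           = rot (induced g0) (restr (b 1)) (restr (b 2)) v_field y *\<^sub>R b 3 (emb y)"
proof -
  let ?\<beta> = "\<lambda>x. g0 x *v correction x"
  have flat: "flat g0 curl_ext = (\<lambda>x. flat g0 v_ext x + x $ 3 *\<^sub>R ?\<beta> x)"
    by (simp add: fun_eq_iff flat_eq_matrix_vector_mult curl_ext_def matrix_vector_right_distrib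
        matrix_vector_mult_scaleR)
  have \<beta>: "smooth_on (\<lambda>x. ?\<beta> x $ j) N" for j
    by (intro smooth_on_matrix_vector_mult smooth_on_correction smooth_on_intros allI)
  have dform: "dform (flat g0 curl_ext) X Y (emb y) = dform (flat g0 v_ext) X Y (emb y)
      + X $ 3 * (?\<beta> (emb y) \<bullet> Y) - Y $ 3 * (?\<beta> (emb y) \<bullet> X)" for X Y
    unfolding flat using smooth_on_differentiable[OF smooth_on_flat_v_ext emb_in_N[OF y]]
      smooth_on_differentiable[OF \<beta> emb_in_N[OF y]]
    by (intro dform_add_component_mult) auto
  have index_sums: "(1::3) + 1 = 2" "(1::3) + 2 = 3" "(2::3) + 1 = 3" "(2::3) + 2 = 1"
    "(3::3) + 1 = 1" "(3::3) + 2 = 2" by simp_all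
  have "curl g0 b curl_ext (emb y)
      = dform (flat g0 curl_ext) (b 2 (emb y)) (b 3 (emb y)) (emb y) *\<^sub>R b 1 (emb y)
      + dform (flat g0 curl_ext) (b 3 (emb y)) (b 1 (emb y)) (emb y) *\<^sub>R b 2 (emb y)
      + dform (flat g0 curl_ext) (b 1 (emb y)) (b 2 (emb y)) (emb y) *\<^sub>R b 3 (emb y)"
    unfolding curl_def sum_3 index_sums ..
  also have "\<dots> = dform (flat g0 v_ext) (b 1 (emb y)) (b 2 (emb y)) (emb y) *\<^sub>R b 3 (emb y)"
    using b3_transversal[OF y] b_adapted_M[OF y]
    by (simp add: dform inner_g0_correction[OF y] curl_corr1_def curl_corr2_def)
  finally show ?thesis
    by (simp add: rot_v_field[OF y])
qed

lemma divg_curl_ext: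
  assumes y: "y \<in> M"
  shows "divg g0 curl_ext (emb y) = divg (induced g0) v_field y"
proof -
  have "divg g0 curl_ext (emb y) = divg g0 v_ext (emb y) + correction (emb y) $ 3"
    unfolding curl_ext_def[abs_def]
    using orthonormal_frame_det_pos[OF b_orthonormal[OF emb_in_U[OF y]]]
      smooth_on_differentiable[OF smooth_on_N[OF smooth_on_vol] emb_in_N[OF y]]
      smooth_on_differentiable[OF smooth_on_v_ext emb_in_N[OF y]]
      smooth_on_differentiable[OF smooth_on_correction emb_in_N[OF y]]
    by (intro divg_add_component_mult) (auto simp: vol_def[abs_def])
  then show ?thesis
    using b3_transversal[OF y] b_adapted_M[OF y] by (simp add: correction_def div_corr_def)
qed

subsection \<open>A divergence-free extension\<close>

definition vol_ext :: "real^3 \<Rightarrow> real^3" where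
  "vol_ext x = vol (slice_proj x) *\<^sub>R v_ext x"

definition vol_ext_div :: "real^3 \<Rightarrow> real" where
  "vol_ext_div x = (\<Sum>i\<in>UNIV. pd i (\<lambda>y. vol_ext y $ i) x)"

definition solenoidal_ext :: "real^3 \<Rightarrow> real^3" where
  "solenoidal_ext x =
     (1 / vol x) *\<^sub>R (vol_ext x - (x $ 3 * vol_ext_div (slice_proj x)) *\<^sub>R axis 3 1)"

lemma solenoidal_ext_emb:
  assumes "y \<in> M" shows "solenoidal_ext (emb y) = v_ext (emb y)"
  using vol_pos[OF emb_in_U[OF assms]] by (simp add: solenoidal_ext_def vol_ext_def)

lemma smooth_on_vol_ext: "smooth_on (\<lambda>x. vol_ext x $ i) N"
  unfolding vol_ext_def by (simp, intro smooth_on_intros smooth_on_vol smooth_on_v_ext)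

lemma smooth_on_vol_ext_div: "smooth_on vol_ext_div N"
  unfolding vol_ext_div_def[abs_def] by (intro smooth_on_intros smooth_on_vol_ext)

lemma smooth_on_solenoidal_ext: "smooth_on (\<lambda>x. solenoidal_ext x $ i) N"
proof -
  have "\<forall>x\<in>N. vol x \<noteq> 0"
    using vol_pos N_subset_U by fastforce
  then have "smooth_on (\<lambda>x. (vol_ext x $ i - x $ 3 * vol_ext_div (slice_proj x) * axis 3 1 $ i) / vol x) N"
    by (intro smooth_on_intros smooth_on_vol smooth_on_vol_ext smooth_on_vol_ext_div)
  then show ?thesis
    by (simp add: solenoidal_ext_def)
qed

lemma vol_ext_div_slice_proj:
  assumes x: "x \<in> N"
  shows "vol_ext_div (slice_proj x) = vol_ext_div x"
proof -
  have "pd i (\<lambda>y. vol_ext y $ i) x = pd i (\<lambda>y. vol_ext y $ i) (slice_proj x)" for i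
    using smooth_on_differentiable[OF smooth_on_vol_ext slice_proj_in_N[OF x]]
    by (intro pd_slice_proj_invariant) (simp_all add: vol_ext_def v_ext_slice_proj)
  then show ?thesis
    unfolding vol_ext_div_def by simp
qed

lemma divg_solenoidal_ext:
  assumes x: "x \<in> N"
  shows "divg g0 solenoidal_ext x = 0"
proof -
  let ?D = "\<lambda>y. vol_ext_div (slice_proj y)"
  have D: "?D differentiable (at x)"
    using smooth_on_differentiable[OF smooth_on_compose_slice_proj[OF smooth_on_vol_ext_div] x] .
  have pd_D: "pd 3 (\<lambda>y. y $ 3 * ?D y) x = ?D x"
    using D smooth_on_differentiable[OF smooth_on_vol_ext_div slice_proj_in_N[OF x]]
    by (simp add: pd_mult pd_component pd_compose_slice_proj differentiable_component)
  have "pd i (\<lambda>y. vol y * solenoidal_ext y $ i) x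
      = pd i (\<lambda>y. vol_ext y $ i) x - (if i = 3 then ?D x else 0)" for i
  proof -
    have "pd i (\<lambda>y. vol y * solenoidal_ext y $ i) x
        = pd i (\<lambda>y. vol_ext y $ i - (if i = 3 then y $ 3 * ?D y else 0)) x"
      using vol_pos N_subset_U x
      by (intro pd_cong_open[OF U_open]) (auto simp: solenoidal_ext_def axis_def less_imp_neq[symmetric])
    also have "\<dots> = pd i (\<lambda>y. vol_ext y $ i) x - (if i = 3 then ?D x else 0)"
      using pd_D pd_diff[OF smooth_on_differentiable[OF smooth_on_vol_ext x]
          differentiable_mult[OF differentiable_component D]]
      by (cases "i = 3") auto
    finally show ?thesis .
  qed
  then show ?thesis
    unfolding divg_def vol_def[symmetric]
    by (simp add: sum_subtractf vol_ext_div_def[symmetric] vol_ext_div_slice_proj[OF x])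
qed

end

theorem theorem5:
  fixes U :: "(real^3) set" and g0 :: "real^3 \<Rightarrow> real^3^3"
    and b :: "3 \<Rightarrow> real^3 \<Rightarrow> real^3" and v1 v2 :: "real^2 \<Rightarrow> real"
  defines "Mset \<equiv> {y :: real^2. emb y \<in> U}"
  defines "V \<equiv> (\<lambda>y. v1 y *\<^sub>R restr (b 1) y + v2 y *\<^sub>R restr (b 2) y)"
  assumes U_open: "open U" and meets: "Mset \<noteq> {}"
    and g0_smooth: "\<forall>i j. smooth_on (\<lambda>x. g0 x $ i $ j) U"
    and g0_sym: "\<forall>x\<in>U. \<forall>i j. g0 x $ i $ j = g0 x $ j $ i"
    and g0_pos: "\<forall>x\<in>U. \<forall>\<xi>. \<xi> \<noteq> 0 \<longrightarrow> \<xi> \<bullet> (g0 x *v \<xi>) > 0"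
    and b_smooth: "\<forall>k i. smooth_on (\<lambda>x. b k x $ i) U"
    and b_orthonormal: "\<forall>x\<in>U. \<forall>k l. b k x \<bullet> (g0 x *v b l x) = (if k = l then 1 else 0)"
    and b_adapted: "\<forall>y\<in>Mset. b 1 (emb y) $ 3 = 0 \<and> b 2 (emb y) $ 3 = 0"
    and v_smooth: "smooth_on v1 Mset" "smooth_on v2 Mset"
  shows
    "(\<exists>W u. open W \<and> emb ` Mset \<subseteq> W \<and> W \<subseteq> U \<and> (\<forall>k. smooth_on (u k) W) \<and>
        (\<forall>y\<in>Mset. u 3 (emb y) = 0 \<and> u 1 (emb y) = v1 y \<and> u 2 (emb y) = v2 y) \<and>
        (\<forall>y\<in>Mset.
           curl g0 b (frame_field b u) (emb y)
             = rot (induced g0) (restr (b 1)) (restr (b 2)) V y *\<^sub>R b 3 (emb y) \<and>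
           divg g0 (frame_field b u) (emb y) = divg (induced g0) V y))
     \<and> ((\<forall>y\<in>Mset. divg (induced g0) V y = 0) \<longrightarrow>
        (\<exists>W u. open W \<and> emb ` Mset \<subseteq> W \<and> W \<subseteq> U \<and> (\<forall>k. smooth_on (u k) W) \<and>
           (\<forall>y\<in>Mset. u 3 (emb y) = 0 \<and> u 1 (emb y) = v1 y \<and> u 2 (emb y) = v2 y) \<and>
           (\<forall>x\<in>W. divg g0 (frame_field b u) x = 0)))"
proof -
  interpret adapted_chart U g0 b v1 v2
    using U_open g0_smooth g0_sym g0_pos b_smooth b_orthonormal b_adapted v_smooth
    unfolding Mset_def by unfold_locales (auto simp: orthonormal_frame_def)
  have Mset: "Mset = M" and V: "V = v_field"
    by (simp_all add: Mset_def M_def V_def v_field_def[abs_def])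
  let ?u1 = "frame_coeff curl_ext" and ?u2 = "frame_coeff solenoidal_ext"
  have "\<forall>y\<in>M. curl g0 b (frame_field b ?u1) (emb y)
              = rot (induced g0) (restr (b 1)) (restr (b 2)) v_field y *\<^sub>R b 3 (emb y) \<and>
            divg g0 (frame_field b ?u1) (emb y) = divg (induced g0) v_field y"
    by (simp add: emb_in_U curl_frame_field_frame_coeff divg_frame_field_frame_coeff
        curl_curl_ext divg_curl_ext)
  moreover have "\<forall>x\<in>N. divg g0 (frame_field b ?u2) x = 0"
    using N_subset_U by (auto simp: divg_frame_field_frame_coeff divg_solenoidal_ext)
  moreover note frame_coeff_extension[OF smooth_on_curl_ext curl_ext_emb]
    frame_coeff_extension[OF smooth_on_solenoidal_ext solenoidal_ext_emb]
  ultimately show ?thesis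
    unfolding Mset V using open_N emb_image_M_subset_N N_subset_U by blast
qed

end
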